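(* Let $3\le q\le n$ be an integer, $\Lambda\subseteq\mathbb{Z}/q\mathbb{Z}$ non-empty, $\eta=|\mathrm{supp}\,\mathcal{D}_{q,\Lambda}|\cdot2^{-n}$, $\varepsilon\in[0,1]$, let $g\colon\{0,1\}^m\to\{0,1\}^n$ be $d$-local and $\mathcal{P}_g=g(\mathcal{U}^m)$. Suppose there are $r'\ge1$ non-connected neighborhoods $N_g(i_1),\dots,N_g(i_{r'})$ each of which is Type-1, i.e., with $s_a=|N_g(i_a)|$, the marginal $\mathcal{P}_g|_{N_g(i_a)}$ has total variation distance more than $\varepsilon$ from the uniform distribution $\mathcal{U}^{s_a}$. Then $$\|\mathcal{P}_g-\mathcal{D}_{q,\Lambda}\|\ge 1-\frac{2}{\eta}\exp\{-\varepsilon^2 r'/2\}.$$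
   Context: $\mathcal{U}^s$ is uniform on $\{0,1\}^s$. $\mathcal{D}_{q,\Lambda}$ is uniform over $x\in\{0,1\}^n$ with $|x|\bmod q\in\Lambda$ ($|x|$ the Hamming weight). $\mathcal{P}|_T$ is the marginal on coordinates $T$. A function $g$ is $d$-local if each output bit depends on at most $d$ input bits; $I_g(i)$ is the set of input coordinates on which output $i$ depends; $N_g(i)=\{j: I_g(j)\cap I_g(i)\neq\emptyset\}$. Neighborhoods are non-connected if the sets $\bigcup_{j\in N_g(i_a)}I_g(j)$ are pairwise disjoint. $\|\cdot\|$ is total variation distance. *)

theory Defs
  imports "HOL-Probability.Probability"
begin

text \<open>Bit strings of length n: functions on {..<n} (value undefined outside).\<close>
definition cube :: "nat \<Rightarrow> (nat \<Rightarrow> bool) set" where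
  "cube n = PiE {..<n} (\<lambda>_. UNIV)"

definition unif_on :: "nat set \<Rightarrow> (nat \<Rightarrow> bool) pmf" where
  "unif_on T = pmf_of_set (PiE T (\<lambda>_. UNIV))"

definition marginal :: "(nat \<Rightarrow> bool) pmf \<Rightarrow> nat set \<Rightarrow> (nat \<Rightarrow> bool) pmf" where
  "marginal P T = map_pmf (\<lambda>x. restrict x T) P"

definition tv_dist :: "'a pmf \<Rightarrow> 'a pmf \<Rightarrow> real" where
  "tv_dist p q = (SUP A. \<bar>measure_pmf.prob p A - measure_pmf.prob q A\<bar>)"

definition hweight :: "nat \<Rightarrow> (nat \<Rightarrow> bool) \<Rightarrow> nat" where
  "hweight n x = card {i\<in>{..<n}. x i}"

definition Dsupp :: "nat \<Rightarrow> nat \<Rightarrow> nat set \<Rightarrow> (nat \<Rightarrow> bool) set" where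
  "Dsupp n q \<Lambda> = {x \<in> cube n. hweight n x mod q \<in> \<Lambda>}"

definition D_dist :: "nat \<Rightarrow> nat \<Rightarrow> nat set \<Rightarrow> (nat \<Rightarrow> bool) pmf" where
  "D_dist n q \<Lambda> = pmf_of_set (Dsupp n q \<Lambda>)"

definition P_dist :: "nat \<Rightarrow> ((nat \<Rightarrow> bool) \<Rightarrow> (nat \<Rightarrow> bool)) \<Rightarrow> (nat \<Rightarrow> bool) pmf" where
  "P_dist m g = map_pmf g (pmf_of_set (cube m))"

definition dep_set :: "nat \<Rightarrow> ((nat \<Rightarrow> bool) \<Rightarrow> (nat \<Rightarrow> bool)) \<Rightarrow> nat \<Rightarrow> nat set" where
  "dep_set m g i = {j\<in>{..<m}. \<exists>x\<in>cube m. g (x(j := \<not> x j)) i \<noteq> g x i}"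

definition is_map :: "nat \<Rightarrow> nat \<Rightarrow> ((nat \<Rightarrow> bool) \<Rightarrow> (nat \<Rightarrow> bool)) \<Rightarrow> bool" where
  "is_map m n g \<longleftrightarrow> g ` cube m \<subseteq> cube n"

definition local :: "nat \<Rightarrow> nat \<Rightarrow> nat \<Rightarrow> ((nat \<Rightarrow> bool) \<Rightarrow> (nat \<Rightarrow> bool)) \<Rightarrow> bool" where
  "local m n d g \<longleftrightarrow> (\<forall>i<n. card (dep_set m g i) \<le> d)"

definition nbhd :: "nat \<Rightarrow> nat \<Rightarrow> ((nat \<Rightarrow> bool) \<Rightarrow> (nat \<Rightarrow> bool)) \<Rightarrow> nat \<Rightarrow> nat set" where
  "nbhd m n g i = {j\<in>{..<n}. dep_set m g j \<inter> dep_set m g i \<noteq> {}}"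

definition nbhd_inputs :: "nat \<Rightarrow> nat \<Rightarrow> ((nat \<Rightarrow> bool) \<Rightarrow> (nat \<Rightarrow> bool)) \<Rightarrow> nat \<Rightarrow> nat set" where
  "nbhd_inputs m n g i = (\<Union>j\<in>nbhd m n g i. dep_set m g j)"

end

theory Submission
  imports Defs "HOL-Probability.Hoeffding"
begin

text \<open>Pick, for each of the \<open>r'\<close> neighbourhoods, an event witnessing that the marginal of
\<open>g(U^m)\<close> is \<open>\<epsilon>\<close>-far from uniform, and count how many of these marginal events occur.
Under \<open>g(U^m)\<close> the events are determined by pairwise disjoint blocks of input bits, under the
uniform distribution on \<open>{0,1}^n\<close> by pairwise disjoint blocks of output bits, so in both
cases the indicators are independent, and their means differ by at least \<open>\<epsilon> r'\<close>.
Hoeffding's inequality for the threshold halfway between the means gives a test \<open>T\<close> with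
\<open>P_g(T) \<ge> 1 - e\<close> and \<open>U^n(T) \<le> e\<close>, where \<open>e = exp(-\<epsilon>^2 r'/2)\<close>. As \<open>D_{q,\<Lambda>}\<close> is
uniform on a set of density \<open>\<eta>\<close>, \<open>D(T) \<le> U^n(T)/\<eta>\<close>, and \<open>P_g(T) - D(T)\<close> bounds
the total variation distance from below.\<close>

lemma finite_cube [simp]: "finite (cube k)"
  unfolding cube_def by (intro finite_PiE) auto

lemma card_cube: "card (cube k) = 2 ^ k"
  unfolding cube_def by (simp add: card_PiE)

lemma cube_not_empty [simp]: "cube k \<noteq> {}"
  unfolding cube_def by auto

lemma restrict_in_cube [simp]: "restrict x {..<k} \<in> cube k"
  unfolding cube_def by auto

lemma fun_upd_in_cube: "x \<in> cube k \<Longrightarrow> i < k \<Longrightarrow> x(i := b) \<in> cube k"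
  unfolding cube_def by (auto simp: PiE_iff extensional_def)

lemma cube_differ_below: "x \<in> cube k \<Longrightarrow> y \<in> cube k \<Longrightarrow> x i \<noteq> y i \<Longrightarrow> i < k"
  unfolding cube_def by (auto simp: PiE_iff extensional_def)

lemma pmf_of_set_cube: "pmf_of_set (cube k) = Pi_pmf {..<k} undefined (\<lambda>_. pmf_of_set UNIV)"
proof -
  have "PiE_dflt {..<k} undefined (\<lambda>_. UNIV) = cube k"
    by (auto simp: cube_def PiE_dflt_def PiE_def extensional_def)
  then show ?thesis
    by (subst Pi_pmf_of_set) auto
qed

lemma marginal_pmf_of_set_cube:
  assumes "N \<subseteq> {..<k}"
  shows "marginal (pmf_of_set (cube k)) N = unif_on N"
proof -
  have "finite N" using assms finite_subset by blast
  have "PiE_dflt N undefined (\<lambda>_. UNIV) = PiE N (\<lambda>_. UNIV :: bool set)"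
    by (auto simp: PiE_dflt_def PiE_def extensional_def)
  with \<open>finite N\<close> have "unif_on N = Pi_pmf N undefined (\<lambda>_. pmf_of_set UNIV)"
    unfolding unif_on_def by (subst Pi_pmf_of_set) auto
  also have "\<dots> = map_pmf (\<lambda>f. restrict f N) (Pi_pmf {..<k} undefined (\<lambda>_. pmf_of_set UNIV))"
    unfolding restrict_def using assms by (intro Pi_pmf_subset) auto
  finally show ?thesis
    unfolding marginal_def pmf_of_set_cube by simp
qed

lemma sets_PiM_count_space_finite:
  assumes "finite K"
  shows "sets (PiM K (\<lambda>_. count_space (UNIV :: 'b :: countable set))) = Pow (PiE K (\<lambda>_. UNIV))"
proof (intro equalityI subsetI)
  fix S assume "S \<in> sets (PiM K (\<lambda>_. count_space (UNIV :: 'b set)))"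
  then show "S \<in> Pow (PiE K (\<lambda>_. UNIV))"
    using sets.sets_into_space by (fastforce simp: space_PiM)
next
  fix S assume S: "S \<in> Pow (PiE K (\<lambda>_. UNIV :: 'b set))"
  have "countable S"
    using S countable_PiE[OF assms, of "\<lambda>_. UNIV :: 'b set"] countable_subset by auto
  have "S = (\<Union>w\<in>S. PiE K (\<lambda>i. {w i}))"
  proof (intro equalityI subsetI)
    fix x assume "x \<in> (\<Union>w\<in>S. PiE K (\<lambda>i. {w i}))"
    then obtain w where "w \<in> S" "x \<in> PiE K (\<lambda>i. {w i})" by blast
    moreover from this have "x = w"
      using S by (intro extensionalityI[of _ K]) (auto simp: PiE_iff)
    ultimately show "x \<in> S" by simp
  qed (use S in \<open>auto simp: PiE_iff\<close>)
  also have "\<dots> \<in> sets (PiM K (\<lambda>_. count_space UNIV))"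
    using \<open>countable S\<close> assms by (intro sets.countable_UN' sets_PiM_I_finite) auto
  finally show "S \<in> sets (PiM K (\<lambda>_. count_space UNIV))" .
qed

lemma indep_vars_pmf_of_set_cube:
  fixes Y :: "'i \<Rightarrow> (nat \<Rightarrow> bool) \<Rightarrow> 'c :: topological_space"
  assumes "finite I" and K: "\<And>a. a \<in> I \<Longrightarrow> K a \<subseteq> {..<k}" and "disjoint_family_on K I"
    and Y: "\<And>a x y. a \<in> I \<Longrightarrow> (\<And>j. j \<in> K a \<Longrightarrow> x j = y j) \<Longrightarrow> Y a x = Y a y"
  shows "prob_space.indep_vars (measure_pmf (pmf_of_set (cube k))) (\<lambda>_. borel) Y I"
proof -
  let ?M = "measure_pmf (Pi_pmf {..<k} undefined (\<lambda>_. pmf_of_set (UNIV :: bool set)))"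
  have "prob_space.indep_vars ?M (\<lambda>_. count_space UNIV) (\<lambda>x f. f x) {..<k}"
    by (rule indep_vars_Pi_pmf) auto
  then have "prob_space.indep_vars ?M (\<lambda>a. PiM (K a) (\<lambda>_. count_space UNIV)) (\<lambda>a x. restrict (\<lambda>i. x i) (K a)) I"
    using K \<open>disjoint_family_on K I\<close> by (intro prob_space.indep_vars_restrict[OF measure_pmf.prob_space_axioms]) auto
  then have "prob_space.indep_vars ?M (\<lambda>_. borel) (\<lambda>a x. Y a (restrict (\<lambda>i. x i) (K a))) I"
  proof (rule prob_space.indep_vars_compose2[OF measure_pmf.prob_space_axioms])
    fix a assume "a \<in> I"
    then have "finite (K a)" using K finite_subset by blast
    then show "Y a \<in> borel_measurable (PiM (K a) (\<lambda>_. count_space UNIV))"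
      by (intro measurableI) (auto simp: sets_PiM_count_space_finite space_PiM)
  qed
  moreover have "(\<lambda>x. Y a (restrict (\<lambda>i. x i) (K a))) = Y a" if "a \<in> I" for a
    by (rule ext, rule Y[OF that]) simp
  ultimately have "prob_space.indep_vars ?M (\<lambda>_. borel) Y I"
    by (subst (asm) prob_space.indep_vars_cong[OF measure_pmf.prob_space_axioms]) auto
  then show ?thesis
    unfolding pmf_of_set_cube .
qed

lemma output_eq_if_agree_on_dep_set:
  assumes "x \<in> cube m" "y \<in> cube m" and agree: "\<And>i. i \<in> dep_set m g j \<Longrightarrow> x i = y i"
  shows "g x j = g y j"
proof -
  \<comment> \<open>Move from \<open>x\<close> to \<open>y\<close> one disagreeing bit at a time; no such bit lies in \<open>dep_set m g j\<close>.\<close>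
  define D where "D = {i. x i \<noteq> y i}"
  have "finite D"
    using assms(1,2) by (intro finite_subset[of D "{..<m}"]) (auto simp: D_def cube_differ_below)
  moreover have "D \<inter> dep_set m g j = {}"
    using agree by (auto simp: D_def)
  moreover have "{i. x i \<noteq> y i} \<subseteq> D"
    by (simp add: D_def)
  ultimately show ?thesis
    using assms(1)
  proof (induction D arbitrary: x rule: finite_induct)
    case empty
    then show ?case by (simp add: fun_eq_iff)
  next
    case (insert i D)
    show ?case
    proof (cases "x i = y i")
      case True
      with insert show ?thesis by blast
    next
      case False
      have "i < m" using cube_differ_below[OF insert.prems(3) \<open>y \<in> cube m\<close> False] .
      have "i \<notin> dep_set m g j" using insert.prems(1) by blast
      then have "g (x(i := \<not> x i)) j = g x j"
        using \<open>i < m\<close> insert.prems(3) by (auto simp: dep_set_def)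
      moreover have "x(i := \<not> x i) = x(i := y i)"
        using False by auto
      moreover have "g (x(i := y i)) j = g y j"
      proof (rule insert.IH)
        show "D \<inter> dep_set m g j = {}" using insert.prems(1) by blast
        show "{i'. (x(i := y i)) i' \<noteq> y i'} \<subseteq> D" using insert.prems(2) by auto
        show "x(i := y i) \<in> cube m" using \<open>i < m\<close> insert.prems(3) by (rule fun_upd_in_cube[rotated])
      qed
      ultimately show ?thesis by simp
    qed
  qed
qed

lemma restrict_nbhd_eq_if_agree_on_nbhd_inputs:
  assumes "x \<in> cube m" "y \<in> cube m" "\<And>j. j \<in> nbhd_inputs m n g i \<Longrightarrow> x j = y j"
  shows "restrict (g x) (nbhd m n g i) = restrict (g y) (nbhd m n g i)"
proof (rule restrict_ext)
  fix j assume "j \<in> nbhd m n g i"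
  then have "dep_set m g j \<subseteq> nbhd_inputs m n g i"
    unfolding nbhd_inputs_def by (rule UN_upper)
  then have "x i' = y i'" if "i' \<in> dep_set m g j" for i'
    using assms(3) that by blast
  then show "g x j = g y j"
    by (rule output_eq_if_agree_on_dep_set[OF assms(1,2)])
qed

lemma nbhd_disjoint_if_nbhd_inputs_disjoint:
  assumes "nbhd_inputs m n g i \<inter> nbhd_inputs m n g i' = {}"
  shows "nbhd m n g i \<inter> nbhd m n g i' = {}"
proof (rule ccontr)
  assume "nbhd m n g i \<inter> nbhd m n g i' \<noteq> {}"
  then obtain j where "j \<in> nbhd m n g i" "j \<in> nbhd m n g i'" by blast
  then have "dep_set m g j \<noteq> {}" and "dep_set m g j \<subseteq> nbhd_inputs m n g i \<inter> nbhd_inputs m n g i'"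
    by (auto simp: nbhd_def nbhd_inputs_def)
  with assms show False by (simp add: subset_empty)
qed

text \<open>Precomposing with the restriction to \<open>{..<m}\<close> makes statistics of \<open>g\<close> depend only on
their input block everywhere, not just on the cube, as \<open>indep_vars_pmf_of_set_cube\<close> requires.\<close>

lemma P_dist_eq_map_restrict: "P_dist m g = map_pmf (\<lambda>x. g (restrict x {..<m})) (pmf_of_set (cube m))"
  unfolding P_dist_def
proof (rule map_pmf_cong[OF refl])
  fix x assume "x \<in> set_pmf (pmf_of_set (cube m))"
  then have "x \<in> cube m" by simp
  then show "g x = g (restrict x {..<m})"
    by (simp add: cube_def)
qed

lemma bdd_above_prob_diff:
  "bdd_above (range (\<lambda>A. \<bar>measure_pmf.prob p A - measure_pmf.prob q A\<bar>))"
proof (rule bdd_aboveI)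
  fix d assume "d \<in> range (\<lambda>A. \<bar>measure_pmf.prob p A - measure_pmf.prob q A\<bar>)"
  then obtain A where "d = \<bar>measure_pmf.prob p A - measure_pmf.prob q A\<bar>" by blast
  moreover have "0 \<le> measure_pmf.prob p A" "measure_pmf.prob p A \<le> 1"
    and "0 \<le> measure_pmf.prob q A" "measure_pmf.prob q A \<le> 1"
    by simp_all
  ultimately show "d \<le> 1" by linarith
qed

lemma prob_diff_le_tv_dist:
  "\<bar>measure_pmf.prob p A - measure_pmf.prob q A\<bar> \<le> tv_dist p q"
  using bdd_above_prob_diff unfolding tv_dist_def by (rule cSUP_upper[rotated]) simp

lemma tv_dist_witness:
  assumes "e < tv_dist p q"
  obtains A where "e < measure_pmf.prob p A - measure_pmf.prob q A"
proof -
  from assms bdd_above_prob_diff obtain A where A: "e < \<bar>measure_pmf.prob p A - measure_pmf.prob q A\<bar>"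
    unfolding tv_dist_def by (subst (asm) less_cSUP_iff) auto
  have "measure_pmf.prob p (- A) = 1 - measure_pmf.prob p A"
    and "measure_pmf.prob q (- A) = 1 - measure_pmf.prob q A"
    using measure_pmf.prob_compl[of A] by (simp_all add: Compl_eq_Diff_UNIV)
  with A that[of A] that[of "- A"] show ?thesis
    by (cases "measure_pmf.prob p A \<ge> measure_pmf.prob q A") auto
qed

lemma prob_pmf_of_set_le_of_subset:
  assumes "S \<subseteq> U" "finite U" "S \<noteq> {}"
  shows "measure_pmf.prob (pmf_of_set S) T \<le> card U / card S * measure_pmf.prob (pmf_of_set U) T"
proof -
  have "finite S" using assms finite_subset by blast
  then have "card S > 0" "U \<noteq> {}"
    using assms by (auto simp: card_gt_0_iff)
  have "measure_pmf.prob (pmf_of_set S) T = card (S \<inter> T) / card S"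
    using assms(3) \<open>finite S\<close> by (rule measure_pmf_of_set)
  also have "\<dots> \<le> card (U \<inter> T) / card S"
    using assms by (intro divide_right_mono) (auto intro: card_mono)
  also have "\<dots> = card U / card S * measure_pmf.prob (pmf_of_set U) T"
    using measure_pmf_of_set[OF \<open>U \<noteq> {}\<close> assms(2), of T] \<open>card S > 0\<close> assms(2) \<open>U \<noteq> {}\<close>
    by (simp add: card_gt_0_iff)
  finally show ?thesis .
qed

lemma Dsupp_subset_cube: "Dsupp n q \<Lambda> \<subseteq> cube n"
  by (auto simp: Dsupp_def)

lemma Dsupp_nonempty:
  assumes "l \<le> n" "l mod q \<in> \<Lambda>"
  shows "Dsupp n q \<Lambda> \<noteq> {}"
proof -
  define x where "x = (\<lambda>i. if i < n then i < l else undefined)"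
  have "x \<in> cube n"
    by (auto simp: x_def cube_def extensional_def)
  moreover have "{i \<in> {..<n}. x i} = {..<l}"
    using assms(1) by (auto simp: x_def)
  ultimately have "x \<in> Dsupp n q \<Lambda>"
    using assms(2) by (simp add: Dsupp_def hweight_def)
  then show ?thesis by blast
qed

lemma one_le_inverse_Dsupp_density:
  assumes "Dsupp n q \<Lambda> \<noteq> {}"
  shows "1 \<le> 2 ^ n / real (card (Dsupp n q \<Lambda>))"
proof -
  have "card (Dsupp n q \<Lambda>) \<le> card (cube n)"
    by (intro card_mono finite_cube Dsupp_subset_cube)
  with assms show ?thesis
    by (simp add: card_cube card_gt_0_iff finite_subset[OF Dsupp_subset_cube])
qed

lemma prob_D_dist_le:
  assumes "Dsupp n q \<Lambda> \<noteq> {}"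
  shows "measure_pmf.prob (D_dist n q \<Lambda>) T
    \<le> 2 ^ n / real (card (Dsupp n q \<Lambda>)) * measure_pmf.prob (pmf_of_set (cube n)) T"
  unfolding D_dist_def
  using prob_pmf_of_set_le_of_subset[OF Dsupp_subset_cube finite_cube assms] by (simp add: card_cube)

lemma Hoeffding_separation:
  fixes p :: "'a pmf" and q :: "'b pmf" and X :: "'i \<Rightarrow> 'a \<Rightarrow> real" and Y :: "'i \<Rightarrow> 'b \<Rightarrow> real"
  assumes "finite I" "I \<noteq> {}" "0 \<le> \<epsilon>"
    and indep_X: "prob_space.indep_vars (measure_pmf p) (\<lambda>_. borel) X I"
    and indep_Y: "prob_space.indep_vars (measure_pmf q) (\<lambda>_. borel) Y I"
    and X01: "\<And>i x. i \<in> I \<Longrightarrow> X i x \<in> {0..1}" and Y01: "\<And>i y. i \<in> I \<Longrightarrow> Y i y \<in> {0..1}"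
    and gap: "\<And>i. i \<in> I \<Longrightarrow> measure_pmf.expectation q (Y i) + \<epsilon> \<le> measure_pmf.expectation p (X i)"
  defines "c \<equiv> (\<Sum>i\<in>I. measure_pmf.expectation q (Y i)) + \<epsilon> * card I / 2"
  shows "measure_pmf.prob p {x. c \<le> (\<Sum>i\<in>I. X i x)} \<ge> 1 - exp (- (\<epsilon>\<^sup>2 * card I) / 2)"
    and "measure_pmf.prob q {y. c \<le> (\<Sum>i\<in>I. Y i y)} \<le> exp (- (\<epsilon>\<^sup>2 * card I) / 2)"
proof -
  define t where "t = \<epsilon> * card I / 2"
  define \<mu>X where "\<mu>X = (\<Sum>i\<in>I. measure_pmf.expectation p (X i))"
  define \<mu>Y where "\<mu>Y = (\<Sum>i\<in>I. measure_pmf.expectation q (Y i))"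
  have "card I > 0" using assms(1,2) by (simp add: card_gt_0_iff)
  have "t \<ge> 0" using \<open>0 \<le> \<epsilon>\<close> by (simp add: t_def)
  have width: "(\<Sum>i\<in>I. (1 - 0 :: real)\<^sup>2) > 0" using \<open>card I > 0\<close> by simp
  have bound: "- 2 * t\<^sup>2 / (\<Sum>i\<in>I. (1 - 0 :: real)\<^sup>2) = - (\<epsilon>\<^sup>2 * card I) / 2"
    using \<open>card I > 0\<close> by (simp add: t_def power2_eq_square)
  have "(\<Sum>i\<in>I. measure_pmf.expectation q (Y i) + \<epsilon>) \<le> \<mu>X"
    unfolding \<mu>X_def by (intro sum_mono gap)
  then have "\<mu>Y + \<epsilon> * card I \<le> \<mu>X"
    by (simp add: \<mu>Y_def sum.distrib mult.commute)
  then have c_le: "c \<le> \<mu>X - t" and c_eq: "c = \<mu>Y + t"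
    by (simp_all add: c_def \<mu>Y_def t_def)
  interpret HX: Hoeffding_ineq "measure_pmf p" I X "\<lambda>_. 0" "\<lambda>_. 1" \<mu>X
    by unfold_locales (use assms(1) indep_X X01 in \<open>simp_all add: \<mu>X_def\<close>)
  interpret HY: Hoeffding_ineq "measure_pmf q" I Y "\<lambda>_. 0" "\<lambda>_. 1" \<mu>Y
    by unfold_locales (use assms(1) indep_Y Y01 in \<open>simp_all add: \<mu>Y_def\<close>)
  have "measure_pmf.prob p {x. (\<Sum>i\<in>I. X i x) \<le> \<mu>X - t} \<le> exp (- (\<epsilon>\<^sup>2 * card I) / 2)"
    using HX.Hoeffding_ineq_le[OF \<open>t \<ge> 0\<close> width, unfolded bound] by simp
  moreover have "measure_pmf.prob p {x. c \<le> (\<Sum>i\<in>I. X i x)}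
      \<ge> 1 - measure_pmf.prob p {x. (\<Sum>i\<in>I. X i x) \<le> \<mu>X - t}"
  proof -
    have "- {x. c \<le> (\<Sum>i\<in>I. X i x)} \<subseteq> {x. (\<Sum>i\<in>I. X i x) \<le> \<mu>X - t}"
      using c_le by auto
    then have "measure_pmf.prob p (- {x. c \<le> (\<Sum>i\<in>I. X i x)})
        \<le> measure_pmf.prob p {x. (\<Sum>i\<in>I. X i x) \<le> \<mu>X - t}"
      by (rule measure_pmf.finite_measure_mono) simp
    then show ?thesis
      using measure_pmf.prob_compl[of "{x. c \<le> (\<Sum>i\<in>I. X i x)}" p]
      by (simp add: Compl_eq_Diff_UNIV)
  qed
  ultimately show "measure_pmf.prob p {x. c \<le> (\<Sum>i\<in>I. X i x)} \<ge> 1 - exp (- (\<epsilon>\<^sup>2 * card I) / 2)"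
    by linarith
  show "measure_pmf.prob q {y. c \<le> (\<Sum>i\<in>I. Y i y)} \<le> exp (- (\<epsilon>\<^sup>2 * card I) / 2)"
    using HY.Hoeffding_ineq_ge[OF \<open>t \<ge> 0\<close> width, unfolded bound] by (simp add: c_eq)
qed

definition marginal_event :: "nat set \<Rightarrow> (nat \<Rightarrow> bool) set \<Rightarrow> (nat \<Rightarrow> bool) set" where
  "marginal_event N S = {z. restrict z N \<in> S}"

lemma prob_marginal_event:
  "measure_pmf.prob p (marginal_event N S) = measure_pmf.prob (marginal p N) S"
  by (simp add: marginal_event_def marginal_def vimage_def)

lemma indep_marginal_events_uniform:
  assumes "finite I" "\<And>a. a \<in> I \<Longrightarrow> N a \<subseteq> {..<n}" "disjoint_family_on N I"
  shows "prob_space.indep_vars (measure_pmf (pmf_of_set (cube n))) (\<lambda>_. borel)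
           (\<lambda>a. indicator (marginal_event (N a) (S a)) :: _ \<Rightarrow> real) I"
proof (rule indep_vars_pmf_of_set_cube[OF assms])
  fix a and x y :: "nat \<Rightarrow> bool"
  assume "\<And>j. j \<in> N a \<Longrightarrow> x j = y j"
  then have "restrict x (N a) = restrict y (N a)"
    by (rule restrict_ext)
  then show "indicator (marginal_event (N a) (S a)) x = (indicator (marginal_event (N a) (S a)) y :: real)"
    by (simp add: marginal_event_def indicator_def)
qed

lemma indep_marginal_events_local_map:
  assumes "finite I" "disjoint_family_on (\<lambda>a. nbhd_inputs m n g (idx a)) I"
  shows "prob_space.indep_vars (measure_pmf (pmf_of_set (cube m))) (\<lambda>_. borel)
           (\<lambda>a x. indicator (marginal_event (nbhd m n g (idx a)) (S a)) (g (restrict x {..<m})) :: real) I"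
proof (rule indep_vars_pmf_of_set_cube[OF assms(1) _ assms(2)])
  show "nbhd_inputs m n g (idx a) \<subseteq> {..<m}" for a
    by (auto simp: nbhd_inputs_def dep_set_def)
  fix a and x y :: "nat \<Rightarrow> bool"
  assume "\<And>j. j \<in> nbhd_inputs m n g (idx a) \<Longrightarrow> x j = y j"
  then have "restrict x {..<m} j = restrict y {..<m} j" if "j \<in> nbhd_inputs m n g (idx a)" for j
    using that by simp
  then have "restrict (g (restrict x {..<m})) (nbhd m n g (idx a))
      = restrict (g (restrict y {..<m})) (nbhd m n g (idx a))"
    by (rule restrict_nbhd_eq_if_agree_on_nbhd_inputs[OF restrict_in_cube restrict_in_cube])
  then show "indicator (marginal_event (nbhd m n g (idx a)) (S a)) (g (restrict x {..<m}))
      = (indicator (marginal_event (nbhd m n g (idx a)) (S a)) (g (restrict y {..<m})) :: real)"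
    by (simp add: marginal_event_def indicator_def)
qed

lemma local_map_test_set:
  fixes g :: "(nat \<Rightarrow> bool) \<Rightarrow> (nat \<Rightarrow> bool)" and idx :: "'i \<Rightarrow> nat"
    and A :: "'i \<Rightarrow> (nat \<Rightarrow> bool) set"
  assumes "finite I" "I \<noteq> {}" "0 \<le> \<epsilon>"
    and disj: "disjoint_family_on (\<lambda>a. nbhd_inputs m n g (idx a)) I"
    and gap: "\<And>a. a \<in> I \<Longrightarrow>
      measure_pmf.prob (unif_on (nbhd m n g (idx a))) (A a) + \<epsilon>
        \<le> measure_pmf.prob (marginal (P_dist m g) (nbhd m n g (idx a))) (A a)"
  obtains T where "measure_pmf.prob (P_dist m g) T \<ge> 1 - exp (- (\<epsilon>\<^sup>2 * card I) / 2)"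
    and "measure_pmf.prob (pmf_of_set (cube n)) T \<le> exp (- (\<epsilon>\<^sup>2 * card I) / 2)"
proof -
  define N where "N a = nbhd m n g (idx a)" for a
  define G where "G x = g (restrict x {..<m})" for x
  define Y where "Y a = (indicator (marginal_event (N a) (A a)) :: _ \<Rightarrow> real)" for a
  have P_eq: "P_dist m g = map_pmf G (pmf_of_set (cube m))"
    unfolding G_def by (rule P_dist_eq_map_restrict)
  have N_sub: "N a \<subseteq> {..<n}" for a
    by (auto simp: N_def nbhd_def)
  have "disjoint_family_on N I"
    using disj nbhd_disjoint_if_nbhd_inputs_disjoint by (simp add: disjoint_family_on_def N_def)
  with assms(1) N_sub have indep_Y: "prob_space.indep_vars (measure_pmf (pmf_of_set (cube n))) (\<lambda>_. borel) Y I"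
    unfolding Y_def by (intro indep_marginal_events_uniform)
  have indep_X: "prob_space.indep_vars (measure_pmf (pmf_of_set (cube m))) (\<lambda>_. borel) (\<lambda>a x. Y a (G x)) I"
    unfolding Y_def G_def N_def by (rule indep_marginal_events_local_map[OF assms(1) disj])
  have gap_Y: "measure_pmf.expectation (pmf_of_set (cube n)) (Y a) + \<epsilon>
      \<le> measure_pmf.expectation (pmf_of_set (cube m)) (\<lambda>x. Y a (G x))" if "a \<in> I" for a
  proof -
    have "(\<lambda>x. Y a (G x)) = indicator (G -` marginal_event (N a) (A a))"
      by (simp add: Y_def indicator_def fun_eq_iff)
    then have "measure_pmf.expectation (pmf_of_set (cube m)) (\<lambda>x. Y a (G x))
        = measure_pmf.prob (marginal (P_dist m g) (N a)) (A a)"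
      by (simp add: P_eq flip: prob_marginal_event)
    moreover have "measure_pmf.expectation (pmf_of_set (cube n)) (Y a) = measure_pmf.prob (unif_on (N a)) (A a)"
      by (simp add: Y_def prob_marginal_event marginal_pmf_of_set_cube[OF N_sub])
    ultimately show ?thesis
      using gap[OF that] by (simp add: N_def)
  qed
  have Y_01: "Y a z \<in> {0..1}" if "a \<in> I" for a z
    by (simp add: Y_def)
  define c where "c = (\<Sum>a\<in>I. measure_pmf.expectation (pmf_of_set (cube n)) (Y a)) + \<epsilon> * card I / 2"
  note separation = Hoeffding_separation[OF assms(1-3) indep_X indep_Y Y_01 Y_01 gap_Y, folded c_def]
  have "measure_pmf.prob (P_dist m g) {z. c \<le> (\<Sum>a\<in>I. Y a z)}
      = measure_pmf.prob (pmf_of_set (cube m)) {x. c \<le> (\<Sum>a\<in>I. Y a (G x))}"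
    by (simp add: P_eq vimage_def)
  with separation show ?thesis
    by (intro that[of "{z. c \<le> (\<Sum>a\<in>I. Y a z)}"]) simp_all
qed

theorem mainTheorem15:
  fixes q n m d r' :: nat and \<Lambda> :: "nat set" and \<epsilon> :: real
    and g :: "(nat \<Rightarrow> bool) \<Rightarrow> (nat \<Rightarrow> bool)" and idx :: "nat \<Rightarrow> nat"
  assumes "3 \<le> q" and "q \<le> n"
    and "\<Lambda> \<subseteq> {..<q}" and "\<Lambda> \<noteq> {}"
    and "0 \<le> \<epsilon>" and "\<epsilon> \<le> 1"
    and "is_map m n g" and "local m n d g"
    and "1 \<le> r'"
    and "\<forall>a<r'. idx a < n"
    and "inj_on idx {..<r'}"
    and "\<forall>a<r'. \<forall>b<r'. a \<noteq> b \<longrightarrow>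
           nbhd_inputs m n g (idx a) \<inter> nbhd_inputs m n g (idx b) = {}"
    and "\<forall>a<r'. tv_dist (marginal (P_dist m g) (nbhd m n g (idx a)))
                        (unif_on (nbhd m n g (idx a))) > \<epsilon>"
  shows "tv_dist (P_dist m g) (D_dist n q \<Lambda>)
           \<ge> 1 - (2 / (real (card (Dsupp n q \<Lambda>)) / 2 ^ n)) * exp (- (\<epsilon>\<^sup>2 * real r') / 2)"
proof -
  define e where "e = exp (- (\<epsilon>\<^sup>2 * real r') / 2)"
  define \<kappa> where "\<kappa> = 2 ^ n / real (card (Dsupp n q \<Lambda>))"
  have "\<exists>A. \<epsilon> < measure_pmf.prob (marginal (P_dist m g) (nbhd m n g (idx a))) A
      - measure_pmf.prob (unif_on (nbhd m n g (idx a))) A" if "a < r'" for a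
    using assms(13) that by (blast elim: tv_dist_witness)
  then obtain A where A: "\<And>a. a < r' \<Longrightarrow> \<epsilon> < measure_pmf.prob (marginal (P_dist m g) (nbhd m n g (idx a))) (A a)
      - measure_pmf.prob (unif_on (nbhd m n g (idx a))) (A a)"
    by metis
  have gap: "measure_pmf.prob (unif_on (nbhd m n g (idx a))) (A a) + \<epsilon>
      \<le> measure_pmf.prob (marginal (P_dist m g) (nbhd m n g (idx a))) (A a)" if "a \<in> {..<r'}" for a
    using A[of a] that by simp
  have disj: "disjoint_family_on (\<lambda>a. nbhd_inputs m n g (idx a)) {..<r'}"
    using assms(12) by (auto simp: disjoint_family_on_def)
  obtain T where P_T: "measure_pmf.prob (P_dist m g) T \<ge> 1 - e"
    and U_T: "measure_pmf.prob (pmf_of_set (cube n)) T \<le> e"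
    by (rule local_map_test_set[OF finite_lessThan _ assms(5) disj gap])
      (use assms(9) that in \<open>auto simp: e_def lessThan_empty_iff\<close>)
  obtain l where "l \<in> \<Lambda>" using assms(4) by blast
  with assms(2,3) have "Dsupp n q \<Lambda> \<noteq> {}"
    by (intro Dsupp_nonempty[of l]) auto
  then have \<kappa>_ge_1: "1 \<le> \<kappa>" and "measure_pmf.prob (D_dist n q \<Lambda>) T \<le> \<kappa> * measure_pmf.prob (pmf_of_set (cube n)) T"
    unfolding \<kappa>_def by (rule one_le_inverse_Dsupp_density, rule prob_D_dist_le)
  with U_T have D_T: "measure_pmf.prob (D_dist n q \<Lambda>) T \<le> \<kappa> * e"
    by (meson mult_left_mono order_trans zero_le_one)
  have "e \<le> \<kappa> * e"
    using mult_right_mono[OF \<kappa>_ge_1, of e] by (simp add: e_def)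
  with P_T D_T have "1 - 2 * \<kappa> * e \<le> measure_pmf.prob (P_dist m g) T - measure_pmf.prob (D_dist n q \<Lambda>) T"
    by linarith
  also have "\<dots> \<le> tv_dist (P_dist m g) (D_dist n q \<Lambda>)"
    using prob_diff_le_tv_dist abs_ge_self order_trans by metis
  finally show ?thesis
    by (simp add: \<kappa>_def e_def)
qed

end
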